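(* Let $f:\mathbb{R}^n\to\mathbb{R}$ be twice differentiable with $\mu I\preceq \nabla^2 f(x)\preceq L I$ for all $x$ (where $0<\mu\le L$), and strongly self-concordant with constant $M\ge 0$. Let $\kappa=L/\mu$. Run the SR1 method with correction strategy: choose $x_0\in\mathbb{R}^n$ with $M\lambda_f(x_0)\le\frac{\ln(3/2)}{4\kappa}$, set $G_0=L\cdot I$, $r_{-1}=0$, and for $k=0,1,2,\dots$ set $x_{k+1}=x_k-G_k^{-1}\nabla f(x_k)$, $u_k=x_{k+1}-x_k$, $r_k=\|u_k\|_{x_k}$, $\widetilde G_k=\left(1+\frac{Mr_{k-1}}{2}\right)\left(1+\frac{Mr_k}{2}\right)G_k$, $J_k=\int_0^1\nabla^2 f(x_k+tu_k)\,dt$, and $G_{k+1}=\mathrm{SR1}(J_k,\widetilde G_k,u_k)$. If $u_k^\top(\widetilde G_k-J_k)u_k=0$, then $(\widetilde G_k-J_k)u_k=0$ and $G_{k+1}=\widetilde G_k$.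
   Context: $f$ is strongly self-concordant with constant $M\ge0$ if $\nabla^2 f(y)-\nabla^2 f(x)\preceq M\|y-x\|_z\nabla^2 f(w)$ for all $x,y,z,w\in\mathbb{R}^n$, where $\|u\|_x=\sqrt{u^\top\nabla^2 f(x)u}$. $\lambda_f(x)=\langle\nabla f(x),[\nabla^2 f(x)]^{-1}\nabla f(x)\rangle^{1/2}$. For symmetric positive definite $A,G$ and $u\neq 0$, $\mathrm{SR1}(A,G,u)=G$ if $(G-A)u=0$, and otherwise $\mathrm{SR1}(A,G,u)=G-\frac{(G-A)uu^\top(G-A)}{u^\top(G-A)u}$. *)

theory Defs
  imports "HOL-Analysis.Analysis"
begin

definition loewner_le :: "real^'n^'n \<Rightarrow> real^'n^'n \<Rightarrow> bool" where
  "loewner_le A B \<longleftrightarrow> (\<forall>v. v \<bullet> (A *v v) \<le> v \<bullet> (B *v v))"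

definition lnorm :: "(real^'n \<Rightarrow> real^'n^'n) \<Rightarrow> real^'n \<Rightarrow> real^'n \<Rightarrow> real" where
  "lnorm H x u = sqrt (u \<bullet> (H x *v u))"

definition strongly_self_concordant :: "(real^'n \<Rightarrow> real^'n^'n) \<Rightarrow> real \<Rightarrow> bool" where
  "strongly_self_concordant H M \<longleftrightarrow>
     M \<ge> 0 \<and> (\<forall>x y z w. loewner_le (H y - H x) ((M * lnorm H z (y - x)) *\<^sub>R H w))"

definition newton_decrement :: "(real^'n \<Rightarrow> real^'n) \<Rightarrow> (real^'n \<Rightarrow> real^'n^'n) \<Rightarrow> real^'n \<Rightarrow> real" where
  "newton_decrement g H x = sqrt (g x \<bullet> (matrix_inv (H x) *v g x))"

definition outer :: "real^'n \<Rightarrow> real^'n \<Rightarrow> real^'n^'n" where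
  "outer u v = (\<chi> i j. u $ i * v $ j)"

definition SR1 :: "real^'n^'n \<Rightarrow> real^'n^'n \<Rightarrow> real^'n \<Rightarrow> real^'n^'n" where
  "SR1 A G u = (if (G - A) *v u = 0 then G
     else G - (1 / (u \<bullet> ((G - A) *v u))) *\<^sub>R ((G - A) ** outer u u ** (G - A)))"

text \<open>One step of SR1 with correction. The state is (x_k, G_k, r_{k-1});
  the result is (x_{k+1}, G_{k+1}, r_k).\<close>
definition sr1_step :: "(real^'n \<Rightarrow> real^'n) \<Rightarrow> (real^'n \<Rightarrow> real^'n^'n) \<Rightarrow> real
    \<Rightarrow> (real^'n) \<times> (real^'n^'n) \<times> real \<Rightarrow> (real^'n) \<times> (real^'n^'n) \<times> real" where
  "sr1_step g H M s = (case s of (x, G, rp) \<Rightarrow>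
     let x' = x - matrix_inv G *v g x;
         u = x' - x;
         r = lnorm H x u;
         Gt = ((1 + M * rp / 2) * (1 + M * r / 2)) *\<^sub>R G;
         J = integral {0..1::real} (\<lambda>t. H (x + t *\<^sub>R u))
     in (x', SR1 J Gt u, r))"

definition sr1_state :: "(real^'n \<Rightarrow> real^'n) \<Rightarrow> (real^'n \<Rightarrow> real^'n^'n) \<Rightarrow> real \<Rightarrow> real
    \<Rightarrow> real^'n \<Rightarrow> nat \<Rightarrow> (real^'n) \<times> (real^'n^'n) \<times> real" where
  "sr1_state g H M L x0 k = (sr1_step g H M ^^ k) (x0, mat L, 0)"

end

theory Submission
  imports Defs
begin

(* Write Gt_k for the corrected matrix and J_k for the mean Hessian along the step. Along the method
   G_k stays symmetric and H(x_k) <= (1 + M r_{k-1}/2) G_k in the Loewner order. Strong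
   self-concordance gives J_k <= (1 + M r_k/2) H(x_k) and H(x_{k+1}) <= (1 + M r_k/2) J_k; the first
   yields J_k <= Gt_k, and since an SR1 update of a matrix dominating J_k still dominates J_k, the
   second carries the invariant over to k+1. So Gt_k - J_k is symmetric positive semidefinite, and
   for such a matrix D the Cauchy-Schwarz inequality (v'Du)^2 <= (v'Dv)(u'Du) shows that u'Du = 0
   forces Du = 0. Symmetry of the Hessian is not assumed; it holds because H is the derivative of
   a gradient. *)

section \<open>Symmetry of the derivative of a gradient\<close>

lemma second_difference_mean_value:
  fixes f :: "'a::real_inner \<Rightarrow> real" and g :: "'a \<Rightarrow> 'a"
  assumes grad: "\<And>y. (f has_derivative (\<lambda>h. g y \<bullet> h)) (at y)" and "0 \<le> t"
  obtains \<xi> where "\<xi> \<in> {0..t}"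
    and "f (x + t *\<^sub>R a + t *\<^sub>R b) - f (x + t *\<^sub>R a) - f (x + t *\<^sub>R b) + f x
           = t * ((g (x + \<xi> *\<^sub>R a + t *\<^sub>R b) - g (x + \<xi> *\<^sub>R a)) \<bullet> a)"
proof -
  define \<phi> where "\<phi> s = f (x + s *\<^sub>R a + t *\<^sub>R b) - f (x + s *\<^sub>R a)" for s
  have \<phi>': "(\<phi> has_derivative (\<lambda>h. g (x + s *\<^sub>R a + t *\<^sub>R b) \<bullet> (h *\<^sub>R a) - g (x + s *\<^sub>R a) \<bullet> (h *\<^sub>R a)))
      (at s within {0..t})" for s
    unfolding \<phi>_def
    by (intro has_derivative_diff has_derivative_compose[OF _ grad] derivative_eq_intros) auto
  obtain \<xi> where "\<xi> \<in> {0..t}"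
    and "\<phi> t - \<phi> 0 = t * ((g (x + \<xi> *\<^sub>R a + t *\<^sub>R b) - g (x + \<xi> *\<^sub>R a)) \<bullet> a)"
    using mvt_very_simple[of 0 t \<phi>, OF _ \<phi>'] \<open>0 \<le> t\<close> by (auto simp: inner_diff_left right_diff_distrib)
  moreover have "\<phi> t - \<phi> 0 = f (x + t *\<^sub>R a + t *\<^sub>R b) - f (x + t *\<^sub>R a) - f (x + t *\<^sub>R b) + f x"
    by (simp add: \<phi>_def)
  ultimately show ?thesis by (metis that)
qed

lemma second_difference_estimate:
  fixes f :: "'a::real_inner \<Rightarrow> real" and g :: "'a \<Rightarrow> 'a"
  assumes grad: "\<And>y. (f has_derivative (\<lambda>h. g y \<bullet> h)) (at y)"
    and lin: "linear D"
    and dg: "\<And>y. norm (y - x) < d \<Longrightarrow> norm (g y - g x - D (y - x)) \<le> e * norm (y - x)"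
    and t: "0 < t" "t * (norm a + norm b) < d" and e: "0 \<le> e"
  shows "\<bar>f (x + t *\<^sub>R a + t *\<^sub>R b) - f (x + t *\<^sub>R a) - f (x + t *\<^sub>R b) + f x - t\<^sup>2 * (a \<bullet> D b)\<bar>
           \<le> t\<^sup>2 * e * (2 * norm a + norm b) * norm a"
proof -
  define \<Delta> where "\<Delta> = f (x + t *\<^sub>R a + t *\<^sub>R b) - f (x + t *\<^sub>R a) - f (x + t *\<^sub>R b) + f x"
  obtain \<xi> where \<xi>: "\<xi> \<in> {0..t}"
    and mvt: "\<Delta> = t * ((g (x + \<xi> *\<^sub>R a + t *\<^sub>R b) - g (x + \<xi> *\<^sub>R a)) \<bullet> a)"
    using second_difference_mean_value[OF grad less_imp_le[OF t(1)]] unfolding \<Delta>_def by blast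
  define y\<^sub>1 y\<^sub>2 where "y\<^sub>1 = x + \<xi> *\<^sub>R a + t *\<^sub>R b" and "y\<^sub>2 = x + \<xi> *\<^sub>R a"
  define err\<^sub>1 err\<^sub>2 where "err\<^sub>1 = g y\<^sub>1 - g x - D (y\<^sub>1 - x)" and "err\<^sub>2 = g y\<^sub>2 - g x - D (y\<^sub>2 - x)"
  have "norm (y\<^sub>1 - x) \<le> \<xi> * norm a + t * norm b"
    using \<xi> t norm_triangle_ineq[of "\<xi> *\<^sub>R a" "t *\<^sub>R b"] by (simp add: y\<^sub>1_def)
  also have "\<dots> \<le> t * norm a + t * norm b"
    using \<xi> by (simp add: mult_right_mono)
  finally have err\<^sub>1: "norm err\<^sub>1 \<le> e * (t * norm a + t * norm b)"
    unfolding err\<^sub>1_def using t e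
    by (intro order_trans[OF dg mult_left_mono]) (simp_all add: distrib_left)
  have "norm (y\<^sub>2 - x) \<le> t * norm a"
    using \<xi> by (auto simp: y\<^sub>2_def intro: mult_right_mono)
  moreover have "0 \<le> t * norm b" using t by simp
  ultimately have "norm (y\<^sub>2 - x) < d"
    using t(2) unfolding distrib_left by linarith
  then have err\<^sub>2: "norm err\<^sub>2 \<le> e * (t * norm a)"
    unfolding err\<^sub>2_def using \<open>norm (y\<^sub>2 - x) \<le> t * norm a\<close> e
    by (intro order_trans[OF dg mult_left_mono])
  have "g y\<^sub>1 - g y\<^sub>2 = t *\<^sub>R D b + (err\<^sub>1 - err\<^sub>2)"
    using linear_diff[OF lin, of "y\<^sub>1 - x" "y\<^sub>2 - x"] linear_scale[OF lin, of t b]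
    by (simp add: err\<^sub>1_def err\<^sub>2_def y\<^sub>1_def y\<^sub>2_def algebra_simps)
  then have "\<Delta> = t * ((t *\<^sub>R D b + (err\<^sub>1 - err\<^sub>2)) \<bullet> a)"
    using mvt[folded y\<^sub>1_def y\<^sub>2_def] by simp
  then have "\<Delta> - t\<^sup>2 * (a \<bullet> D b) = t * ((err\<^sub>1 - err\<^sub>2) \<bullet> a)"
    by (simp add: inner_add_left inner_commute[of "D b"] power2_eq_square distrib_left)
  also have "\<bar>\<dots>\<bar> \<le> t * (norm (err\<^sub>1 - err\<^sub>2) * norm a)"
    using t Cauchy_Schwarz_ineq2[of "err\<^sub>1 - err\<^sub>2" a] by (simp add: abs_mult mult_left_mono)
  also have "\<dots> \<le> t * ((norm err\<^sub>1 + norm err\<^sub>2) * norm a)"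
    using t norm_triangle_ineq4[of err\<^sub>1 err\<^sub>2] by (simp add: mult_left_mono mult_right_mono)
  also have "\<dots> \<le> t * ((e * (t * norm a + t * norm b) + e * (t * norm a)) * norm a)"
    using t err\<^sub>1 err\<^sub>2 by (intro mult_left_mono mult_right_mono add_mono) auto
  finally show ?thesis
    by (simp add: \<Delta>_def power2_eq_square algebra_simps)
qed

(* The second difference is symmetric in a and b, and by second_difference_estimate it equals
   t^2 a.Db up to o(t^2) as t -> 0. *)
lemma derivative_of_gradient_symmetric:
  fixes f :: "'a::real_inner \<Rightarrow> real" and g :: "'a \<Rightarrow> 'a"
  assumes grad: "\<And>y. (f has_derivative (\<lambda>h. g y \<bullet> h)) (at y)"
    and hess: "(g has_derivative D) (at x)"
  shows "a \<bullet> D b = b \<bullet> D a"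
proof -
  define K where "K = (2 * norm a + norm b) * norm a + (2 * norm b + norm a) * norm b + 1"
  have K: "K > 0" by (simp add: K_def add_nonneg_pos)
  have lin: "linear D" using hess by (rule has_derivative_linear)
  have "\<bar>a \<bullet> D b - b \<bullet> D a\<bar> \<le> 0 + \<epsilon>" if "\<epsilon> > 0" for \<epsilon>
  proof -
    define e where "e = \<epsilon> / K"
    have e: "e > 0" using that K by (simp add: e_def)
    obtain d where d: "d > 0"
      and dg: "\<And>y. norm (y - x) < d \<Longrightarrow> norm (g y - g x - D (y - x)) \<le> e * norm (y - x)"
      using hess e unfolding has_derivative_at_alt by blast
    define t where "t = d / (norm a + norm b + 1)"
    have "norm a + norm b + 1 > 0" by (simp add: add_nonneg_pos)
    then have t: "t > 0" "t * (norm a + norm b) < d"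
      using d by (simp_all add: t_def field_simps)
    define P where "P = f (x + t *\<^sub>R a + t *\<^sub>R b) - f (x + t *\<^sub>R a) - f (x + t *\<^sub>R b) + f x"
    have est_ab: "\<bar>P - t\<^sup>2 * (a \<bullet> D b)\<bar> \<le> t\<^sup>2 * e * (2 * norm a + norm b) * norm a"
      unfolding P_def using e t by (intro second_difference_estimate[OF grad lin dg]) auto
    have "\<bar>f (x + t *\<^sub>R b + t *\<^sub>R a) - f (x + t *\<^sub>R b) - f (x + t *\<^sub>R a) + f x
        - t\<^sup>2 * (b \<bullet> D a)\<bar> \<le> t\<^sup>2 * e * (2 * norm b + norm a) * norm b"
      using e t by (intro second_difference_estimate[OF grad lin dg]) (auto simp: add.commute)
    then have est_ba: "\<bar>P - t\<^sup>2 * (b \<bullet> D a)\<bar> \<le> t\<^sup>2 * e * (2 * norm b + norm a) * norm b"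
      unfolding P_def by (simp add: algebra_simps)
    have "t\<^sup>2 * \<bar>a \<bullet> D b - b \<bullet> D a\<bar> = \<bar>(P - t\<^sup>2 * (b \<bullet> D a)) - (P - t\<^sup>2 * (a \<bullet> D b))\<bar>"
      by (simp add: abs_mult flip: right_diff_distrib)
    also have "\<dots> \<le> t\<^sup>2 * e * (2 * norm a + norm b) * norm a + t\<^sup>2 * e * (2 * norm b + norm a) * norm b"
      using est_ab est_ba by linarith
    also have "\<dots> \<le> t\<^sup>2 * (e * K)"
      using e by (simp add: K_def algebra_simps)
    finally show ?thesis
      using t e K by (simp add: e_def)
  qed
  then show ?thesis using field_le_epsilon[of "\<bar>a \<bullet> D b - b \<bullet> D a\<bar>" 0] by simp
qed

section \<open>Loewner order and the SR1 update\<close>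

lemma mat_matrix_vector_mult: "(mat c :: real^'n^'n) *v x = c *\<^sub>R x"
  by (simp add: vec_eq_iff matrix_vector_mult_def mat_def if_distrib[of "\<lambda>a. a * _"] cong: if_cong)

lemma transpose_diff: "transpose (A - B) = transpose A - (transpose B :: real^'n^'n)"
  by (simp add: vec_eq_iff transpose_def)

lemma matrix_entry_eq_inner_axis: "(A::real^'n^'n) $ i $ j = axis i 1 \<bullet> (A *v axis j 1)"
  by (simp add: matrix_vector_mul_component inner_axis inner_axis')

lemma symmetric_matrix_inner_commute:
  assumes "transpose (A::real^'n^'n) = A"
  shows "a \<bullet> (A *v b) = b \<bullet> (A *v a)"
  by (metis assms dot_lmul_matrix inner_commute transpose_matrix_vector)

lemma symmetric_matrixI:
  assumes "\<And>a b. a \<bullet> ((A::real^'n^'n) *v b) = b \<bullet> (A *v a)"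
  shows "transpose A = A"
  by (simp add: vec_eq_iff transpose_def matrix_entry_eq_inner_axis[of A] assms)

lemma loewner_le_iff_psd: "loewner_le A B \<longleftrightarrow> (\<forall>v. 0 \<le> v \<bullet> ((B - A) *v v))"
  by (simp add: loewner_le_def matrix_vector_mult_diff_rdistrib inner_diff_right)

lemma loewner_le_trans: "loewner_le A B \<Longrightarrow> loewner_le B C \<Longrightarrow> loewner_le A C"
  unfolding loewner_le_def by (meson order_trans)

lemma loewner_le_scaleR: "0 \<le> c \<Longrightarrow> loewner_le A B \<Longrightarrow> loewner_le (c *\<^sub>R A) (c *\<^sub>R B)"
  by (simp add: loewner_le_def scaleR_matrix_vector_assoc[symmetric] mult_left_mono)

lemma psd_if_mat_loewner_le:
  assumes "0 \<le> c" and "loewner_le (mat c) A"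
  shows "0 \<le> v \<bullet> (A *v v)"
proof -
  have "c * (v \<bullet> v) \<le> v \<bullet> (A *v v)"
    using assms(2) by (simp add: loewner_le_def mat_matrix_vector_mult)
  moreover have "0 \<le> c * (v \<bullet> v)" using assms(1) by simp
  ultimately show ?thesis by linarith
qed

lemma psd_Cauchy_Schwarz:
  fixes D :: "real^'n^'n"
  assumes sym: "transpose D = D" and psd: "\<And>w. 0 \<le> w \<bullet> (D *v w)"
  shows "(v \<bullet> (D *v u))\<^sup>2 \<le> (v \<bullet> (D *v v)) * (u \<bullet> (D *v u))"
proof -
  define a b c where "a = v \<bullet> (D *v v)" and "b = v \<bullet> (D *v u)" and "c = u \<bullet> (D *v u)"
  have quadratic: "0 \<le> a + 2 * s * b + s\<^sup>2 * c" for s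
    using psd[of "v + s *\<^sub>R u"] symmetric_matrix_inner_commute[OF sym, of u v]
    by (simp add: a_def b_def c_def matrix_vector_right_distrib inner_add_left inner_add_right
        power2_eq_square algebra_simps)
  show ?thesis
  proof (cases "c = 0")
    case True
    have "b = 0"
    proof (rule ccontr)
      assume "b \<noteq> 0"
      then show False
        using quadratic[of "- (a + 1) / (2 * b)"] True by (simp add: field_simps)
    qed
    then show ?thesis using True by (simp add: b_def c_def)
  next
    case False
    then have "c > 0" using psd[of u] by (simp add: c_def)
    moreover have "0 \<le> a - b\<^sup>2 / c"
      using quadratic[of "- b / c"] False by (simp add: power2_eq_square)
    ultimately show ?thesis by (simp add: a_def b_def c_def field_simps)
  qed
qed

lemma psd_quadratic_form_eq_0:
  fixes D :: "real^'n^'n"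
  assumes "transpose D = D" and "\<And>w. 0 \<le> w \<bullet> (D *v w)" and "u \<bullet> (D *v u) = 0"
  shows "D *v u = 0"
  using psd_Cauchy_Schwarz[OF assms(1,2), of "D *v u" u] assms(3) by simp

lemma outer_self_matrix_vector_mult: "outer u u *v w = (u \<bullet> w) *\<^sub>R u"
  by (simp add: vec_eq_iff matrix_vector_mult_def outer_def inner_vec_def sum_distrib_left
      algebra_simps)

lemma symmetric_SR1:
  assumes "transpose A = A" and "transpose G = G"
  shows "transpose (SR1 A G u) = SR1 A G u"
proof -
  have "transpose (outer u u) = outer u u"
    by (simp add: vec_eq_iff transpose_def outer_def mult.commute)
  moreover have "transpose (G - A) = G - A" using assms by (simp add: transpose_diff)
  ultimately show ?thesis
    using assms by (simp add: SR1_def transpose_diff transpose_scalar matrix_transpose_mul matrix_mul_assoc)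
qed

lemma loewner_le_SR1:
  assumes sym: "transpose A = A" "transpose G = G" and le: "loewner_le A G"
  shows "loewner_le A (SR1 A G u)"
proof (cases "(G - A) *v u = 0")
  case True
  then show ?thesis using le by (simp add: SR1_def)
next
  case False
  define D where "D = G - A"
  have sD: "transpose D = D" using sym by (simp add: D_def transpose_diff)
  have psd: "0 \<le> w \<bullet> (D *v w)" for w
    using le by (simp add: loewner_le_iff_psd D_def)
  define c where "c = u \<bullet> (D *v u)"
  have "c > 0"
    using psd_quadratic_form_eq_0[OF sD psd] psd[of u] False by (force simp: c_def D_def)
  have "(1 / c) * (v \<bullet> (D *v u))\<^sup>2 \<le> v \<bullet> (D *v v)" for v
    using psd_Cauchy_Schwarz[OF sD psd, of v u] \<open>c > 0\<close> by (simp add: c_def field_simps)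
  then have "0 \<le> v \<bullet> ((D - (1 / c) *\<^sub>R (D ** outer u u ** D)) *v v)" for v
    using symmetric_matrix_inner_commute[OF sD, of u v]
    by (simp add: matrix_vector_mult_diff_rdistrib inner_diff_right
        scaleR_matrix_vector_assoc[symmetric] outer_self_matrix_vector_mult
        matrix_vector_mult_scaleR matrix_vector_mul_assoc[symmetric] power2_eq_square)
  then show ?thesis
    using False by (simp add: loewner_le_iff_psd SR1_def D_def c_def algebra_simps)
qed

section \<open>Mean Hessian along a segment\<close>

lemma bounded_linear_inner_matrix_vector: "bounded_linear (\<lambda>A::real^'n^'n. a \<bullet> (A *v b))"
proof -
  have "linear (\<lambda>A::real^'n^'n. a \<bullet> (A *v b))"
    by (rule linearI) (simp_all add: matrix_vector_mult_add_rdistrib inner_add_right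
        scaleR_matrix_vector_assoc[symmetric])
  then show ?thesis by (simp add: linear_conv_bounded_linear)
qed

lemma loewner_le_has_integral:
  fixes F G :: "'a::euclidean_space \<Rightarrow> real^'n^'n"
  assumes "(F has_integral A) S" and "(G has_integral B) S"
    and "\<And>t. t \<in> S \<Longrightarrow> loewner_le (F t) (G t)"
  shows "loewner_le A B"
  unfolding loewner_le_def
proof
  fix v :: "real^'n"
  have "((\<lambda>t. v \<bullet> (F t *v v)) has_integral v \<bullet> (A *v v)) S"
    using has_integral_linear[OF assms(1) bounded_linear_inner_matrix_vector] by (simp add: o_def)
  moreover have "((\<lambda>t. v \<bullet> (G t *v v)) has_integral v \<bullet> (B *v v)) S"
    using has_integral_linear[OF assms(2) bounded_linear_inner_matrix_vector] by (simp add: o_def)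
  ultimately show "v \<bullet> (A *v v) \<le> v \<bullet> (B *v v)"
    by (rule has_integral_le) (use assms(3) in \<open>simp add: loewner_le_def\<close>)
qed

lemma has_integral_affine_scaleR:
  "((\<lambda>t::real. (a + b * t) *\<^sub>R A) has_integral ((a + b / 2) *\<^sub>R A)) {0..1}"
proof -
  have "((\<lambda>t::real. a + b * t) has_integral (a + b / 2)) {0..1}"
    using has_integral_add[OF has_integral_const_real[of a 0 1]
        has_integral_mult_right[OF ident_has_integral[of 0 1], of b]] by simp
  then show ?thesis by (rule has_integral_scaleR_left)
qed

lemma lnorm_scaleR: "lnorm H x (c *\<^sub>R w) = \<bar>c\<bar> * lnorm H x w"
proof -
  have "(c *\<^sub>R w) \<bullet> (H x *v (c *\<^sub>R w)) = c\<^sup>2 * (w \<bullet> (H x *v w))"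
    by (simp add: matrix_vector_mult_scaleR power2_eq_square)
  then show ?thesis by (simp add: lnorm_def real_sqrt_mult)
qed

definition avg_hessian :: "(real^'n \<Rightarrow> real^'n^'n) \<Rightarrow> real^'n \<Rightarrow> real^'n \<Rightarrow> real^'n^'n" where
  "avg_hessian H x u = integral {0..1} (\<lambda>t. H (x + t *\<^sub>R u))"

locale strongly_self_concordant_hessian =
  fixes H :: "real^'n \<Rightarrow> real^'n^'n" and M :: real
  assumes ssc: "strongly_self_concordant H M"
    and symmetric: "\<And>x. transpose (H x) = H x"
    and psd: "\<And>x v. 0 \<le> v \<bullet> (H x *v v)"
begin

lemma lnorm_nonneg: "0 \<le> lnorm H x u"
  by (simp add: lnorm_def psd)

lemma M_nonneg: "0 \<le> M"
  using ssc by (simp add: strongly_self_concordant_def)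

lemma loewner_le_ssc: "loewner_le (H y) (H x + (M * lnorm H z (y - x)) *\<^sub>R H w)"
  using ssc by (simp add: strongly_self_concordant_def loewner_le_iff_psd algebra_simps)

lemma isCont_quadratic_form: "isCont (\<lambda>y. v \<bullet> (H y *v v)) x"
proof -
  have bound: "norm (v \<bullet> (H y *v v) - v \<bullet> (H x *v v)) \<le> M * lnorm H x (y - x) * (v \<bullet> (H x *v v))"
    for y
    using loewner_le_ssc[of y x x x, unfolded loewner_le_def, rule_format, of v]
      loewner_le_ssc[of x y x x, unfolded loewner_le_def, rule_format, of v]
      lnorm_scaleR[of H x "-1" "y - x"]
    by (simp add: matrix_vector_mult_add_rdistrib inner_add_right scaleR_matrix_vector_assoc[symmetric])
  have "isCont (\<lambda>y. M * lnorm H x (y - x) * (v \<bullet> (H x *v v))) x"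
    unfolding lnorm_def
    by (intro continuous_intros bounded_linear.continuous[OF matrix_vector_mul_bounded_linear])
  then have "((\<lambda>y. M * lnorm H x (y - x) * (v \<bullet> (H x *v v))) \<longlongrightarrow> 0) (at x)"
    by (simp add: isCont_def lnorm_def)
  then have "((\<lambda>y. v \<bullet> (H y *v v) - v \<bullet> (H x *v v)) \<longlongrightarrow> 0) (at x)"
    by (rule Lim_null_comparison[OF always_eventually[OF allI[OF bound]]])
  then show ?thesis by (simp add: isCont_def LIM_zero_iff)
qed

lemma isCont_bilinear_form: "isCont (\<lambda>y. a \<bullet> (H y *v b)) x"
proof -
  have "(\<lambda>y. a \<bullet> (H y *v b))
      = (\<lambda>y. ((a + b) \<bullet> (H y *v (a + b)) - (a - b) \<bullet> (H y *v (a - b))) / 4)"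
    using symmetric_matrix_inner_commute[OF symmetric, of a _ b]
    by (simp add: fun_eq_iff matrix_vector_right_distrib matrix_vector_mult_diff_distrib inner_add_left
        inner_add_right inner_diff_left inner_diff_right algebra_simps)
  then show ?thesis by (simp add: continuous_intros isCont_quadratic_form)
qed

lemma continuous_on_hessian: "continuous_on S H"
proof -
  have "continuous_on S (\<lambda>y. \<chi> i j. axis i 1 \<bullet> (H y *v axis j 1))"
    by (intro continuous_on_vec_lambda continuous_at_imp_continuous_on ballI isCont_bilinear_form)
  then show ?thesis by (simp flip: matrix_entry_eq_inner_axis)
qed

lemma hessian_segment_has_integral:
  "((\<lambda>t. H (x + t *\<^sub>R u)) has_integral avg_hessian H x u) {0..1}"
  unfolding avg_hessian_def
  by (intro integrable_integral integrable_continuous_interval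
      continuous_on_compose2[OF continuous_on_hessian[of UNIV]]) (auto intro!: continuous_intros)

lemma symmetric_avg_hessian: "transpose (avg_hessian H x u) = avg_hessian H x u"
proof (rule symmetric_matrixI)
  fix a b
  have "((\<lambda>t. a \<bullet> (H (x + t *\<^sub>R u) *v b)) has_integral a \<bullet> (avg_hessian H x u *v b)) {0..1}"
    using has_integral_linear[OF hessian_segment_has_integral bounded_linear_inner_matrix_vector]
    by (simp add: o_def)
  moreover have "((\<lambda>t. b \<bullet> (H (x + t *\<^sub>R u) *v a)) has_integral b \<bullet> (avg_hessian H x u *v a)) {0..1}"
    using has_integral_linear[OF hessian_segment_has_integral bounded_linear_inner_matrix_vector]
    by (simp add: o_def)
  ultimately show "a \<bullet> (avg_hessian H x u *v b) = b \<bullet> (avg_hessian H x u *v a)"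
    by (simp add: symmetric_matrix_inner_commute[OF symmetric] has_integral_unique)
qed

lemma avg_hessian_le: "loewner_le (avg_hessian H x u) ((1 + M * lnorm H x u / 2) *\<^sub>R H x)"
proof (rule loewner_le_has_integral[OF hessian_segment_has_integral has_integral_affine_scaleR])
  fix t :: real
  assume "t \<in> {0..1}"
  then show "loewner_le (H (x + t *\<^sub>R u)) ((1 + M * lnorm H x u * t) *\<^sub>R H x)"
    using loewner_le_ssc[of "x + t *\<^sub>R u" x x x] by (simp add: lnorm_scaleR algebra_simps)
qed

lemma hessian_le_avg_hessian:
  "loewner_le (H (x + u)) ((1 + M * lnorm H x u / 2) *\<^sub>R avg_hessian H x u)"
proof -
  \<comment> \<open>Average H(x+u) <= H(x+tu) + M(1-t)r H(w) first over t, then over w = x+su.\<close>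
  define r J where "r = lnorm H x u" and "J = avg_hessian H x u"
  have const: "((\<lambda>t. H (x + u)) has_integral H (x + u)) {0..1::real}"
    using has_integral_const_real[of "H (x + u)" 0 1] by simp
  have step: "loewner_le (H (x + u)) (J + (M * r / 2) *\<^sub>R H w)" for w
  proof -
    have "((\<lambda>t. H (x + t *\<^sub>R u) + (M * r + - M * r * t) *\<^sub>R H w) has_integral J + (M * r / 2) *\<^sub>R H w)
        {0..1}"
      using has_integral_add[OF hessian_segment_has_integral has_integral_affine_scaleR[of "M * r" "- M * r"]]
      by (simp add: J_def)
    then show ?thesis
    proof (rule loewner_le_has_integral[OF const])
      fix t :: real
      assume "t \<in> {0..1}"
      have "lnorm H x (x + u - (x + t *\<^sub>R u)) = lnorm H x ((1 - t) *\<^sub>R u)"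
        by (rule arg_cong[where f = "lnorm H x"]) (simp add: algebra_simps)
      also have "\<dots> = (1 - t) * r"
        using \<open>t \<in> {0..1}\<close> by (simp add: r_def lnorm_scaleR)
      finally have "lnorm H x (x + u - (x + t *\<^sub>R u)) = (1 - t) * r" .
      then show "loewner_le (H (x + u)) (H (x + t *\<^sub>R u) + (M * r + - M * r * t) *\<^sub>R H w)"
        using loewner_le_ssc[of "x + u" "x + t *\<^sub>R u" x w] by (simp only:) (simp add: algebra_simps)
    qed
  qed
  have "((\<lambda>t. J + (M * r / 2) *\<^sub>R H (x + t *\<^sub>R u)) has_integral J + (M * r / 2) *\<^sub>R J) {0..1}"
    using has_integral_add[OF has_integral_const_real[of J 0 1]
        has_integral_cmul[OF hessian_segment_has_integral, of "M * r / 2"]]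
    by (simp add: J_def)
  then have "loewner_le (H (x + u)) (J + (M * r / 2) *\<^sub>R J)"
    by (rule loewner_le_has_integral[OF const]) (rule step)
  then show ?thesis by (simp add: r_def J_def scaleR_add_left)
qed

end

section \<open>The SR1 method with correction\<close>

definition sr1_invariant :: "(real^'n \<Rightarrow> real^'n^'n) \<Rightarrow> real \<Rightarrow> (real^'n) \<times> (real^'n^'n) \<times> real \<Rightarrow> bool"
  where "sr1_invariant H M s \<longleftrightarrow> (case s of (x, G, r) \<Rightarrow>
    transpose G = G \<and> 0 \<le> r \<and> loewner_le (H x) ((1 + M * r / 2) *\<^sub>R G))"

lemma sr1_state_Suc: "sr1_state g H M L x0 (Suc k) = sr1_step g H M (sr1_state g H M L x0 k)"
  by (simp add: sr1_state_def)

context strongly_self_concordant_hessian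
begin

lemma avg_hessian_le_corrected:
  assumes "sr1_invariant H M (x, G, r)"
  shows "loewner_le (avg_hessian H x u) (((1 + M * r / 2) * (1 + M * lnorm H x u / 2)) *\<^sub>R G)"
proof -
  have "0 \<le> 1 + M * lnorm H x u / 2" using M_nonneg lnorm_nonneg by simp
  then have "loewner_le ((1 + M * lnorm H x u / 2) *\<^sub>R H x)
      (((1 + M * r / 2) * (1 + M * lnorm H x u / 2)) *\<^sub>R G)"
    using assms loewner_le_scaleR[of "1 + M * lnorm H x u / 2" "H x" "(1 + M * r / 2) *\<^sub>R G"]
    by (simp add: sr1_invariant_def mult.commute)
  then show ?thesis
    by (rule loewner_le_trans[OF avg_hessian_le])
qed

lemma sr1_invariant_step:
  fixes x u :: "real^'n" and G :: "real^'n^'n" and r :: real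
  assumes inv: "sr1_invariant H M (x, G, r)"
  defines "Gt \<equiv> ((1 + M * r / 2) * (1 + M * lnorm H x u / 2)) *\<^sub>R G"
  shows "sr1_invariant H M (x + u, SR1 (avg_hessian H x u) Gt u, lnorm H x u)"
proof -
  define J where "J = avg_hessian H x u"
  have symG: "transpose G = G" using inv by (simp add: sr1_invariant_def)
  then have sym: "transpose (SR1 J Gt u) = SR1 J Gt u"
    by (intro symmetric_SR1) (simp_all add: J_def Gt_def symmetric_avg_hessian transpose_scalar symG)
  have "loewner_le J (SR1 J Gt u)"
    using inv by (intro loewner_le_SR1)
      (simp_all add: J_def Gt_def symmetric_avg_hessian transpose_scalar avg_hessian_le_corrected symG)
  then have "loewner_le ((1 + M * lnorm H x u / 2) *\<^sub>R J) ((1 + M * lnorm H x u / 2) *\<^sub>R SR1 J Gt u)"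
    using M_nonneg lnorm_nonneg by (intro loewner_le_scaleR) simp_all
  then have "loewner_le (H (x + u)) ((1 + M * lnorm H x u / 2) *\<^sub>R SR1 J Gt u)"
    using hessian_le_avg_hessian loewner_le_trans unfolding J_def by blast
  with sym show ?thesis by (simp add: sr1_invariant_def J_def lnorm_nonneg)
qed

lemma sr1_invariant_sr1_step:
  assumes "sr1_invariant H M s"
  shows "sr1_invariant H M (sr1_step g H M s)"
proof -
  obtain x G r where s: "s = (x, G, r)" by (metis prod_cases3)
  define x' where "x' = x - matrix_inv G *v g x"
  have "sr1_invariant H M (x + (x' - x),
      SR1 (avg_hessian H x (x' - x)) (((1 + M * r / 2) * (1 + M * lnorm H x (x' - x) / 2)) *\<^sub>R G) (x' - x),
      lnorm H x (x' - x))"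
    using assms s by (intro sr1_invariant_step) simp
  then show ?thesis
    unfolding s sr1_step_def Let_def prod.case x'_def[symmetric] by (simp add: avg_hessian_def)
qed

lemma sr1_invariant_funpow:
  "sr1_invariant H M s \<Longrightarrow> sr1_invariant H M ((sr1_step g H M ^^ k) s)"
  by (induction k) (simp_all add: sr1_invariant_sr1_step)

lemma sr1_step_skips_degenerate_update:
  assumes "sr1_invariant H M s"
  shows "case s of (x, G, rp) \<Rightarrow>
           (let x' = x - matrix_inv G *v g x;
                u = x' - x;
                r = lnorm H x u;
                Gt = ((1 + M * rp / 2) * (1 + M * r / 2)) *\<^sub>R G;
                J = integral {0..1::real} (\<lambda>t. H (x + t *\<^sub>R u))
            in u \<bullet> ((Gt - J) *v u) = 0 \<longrightarrow>
                 (Gt - J) *v u = 0 \<and> fst (snd (sr1_step g H M s)) = Gt)"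
proof -
  obtain x G r where s: "s = (x, G, r)" by (metis prod_cases3)
  define u where "u = x - matrix_inv G *v g x - x"
  define Gt where "Gt = ((1 + M * r / 2) * (1 + M * lnorm H x u / 2)) *\<^sub>R G"
  define J where "J = avg_hessian H x u"
  have inv: "sr1_invariant H M (x, G, r)" using assms s by simp
  then have "transpose (Gt - J) = Gt - J"
    by (simp add: sr1_invariant_def Gt_def J_def transpose_diff transpose_scalar symmetric_avg_hessian)
  moreover have "\<And>w. 0 \<le> w \<bullet> ((Gt - J) *v w)"
    using avg_hessian_le_corrected[OF inv] by (simp add: loewner_le_iff_psd Gt_def J_def)
  ultimately have "u \<bullet> ((Gt - J) *v u) = 0 \<Longrightarrow> (Gt - J) *v u = 0"
    by (rule psd_quadratic_form_eq_0)
  then show ?thesis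
    unfolding s sr1_step_def Let_def prod.case u_def[symmetric] Gt_def[symmetric]
      avg_hessian_def[symmetric] J_def[symmetric]
    by (simp add: SR1_def)
qed

end

theorem proposition1:
  fixes f :: "real^'n \<Rightarrow> real"
    and g :: "real^'n \<Rightarrow> real^'n"
    and H :: "real^'n \<Rightarrow> real^'n^'n"
    and \<mu> L M :: real
    and x0 :: "real^'n"
  assumes grad: "\<And>x. (f has_derivative (\<lambda>h. g x \<bullet> h)) (at x)"
    and hess: "\<And>x. (g has_derivative (\<lambda>h. H x *v h)) (at x)"
    and mu_pos: "0 < \<mu>" and mu_le_L: "\<mu> \<le> L"
    and lower: "\<And>x. loewner_le (mat \<mu>) (H x)"
    and upper: "\<And>x. loewner_le (H x) (mat L)"
    and ssc: "strongly_self_concordant H M"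
    and init: "M * newton_decrement g H x0 \<le> ln (3/2) / (4 * (L / \<mu>))"
  shows "\<forall>k. case sr1_state g H M L x0 k of (x, G, rp) \<Rightarrow>
           (let x' = x - matrix_inv G *v g x;
                u = x' - x;
                r = lnorm H x u;
                Gt = ((1 + M * rp / 2) * (1 + M * r / 2)) *\<^sub>R G;
                J = integral {0..1::real} (\<lambda>t. H (x + t *\<^sub>R u))
            in u \<bullet> ((Gt - J) *v u) = 0 \<longrightarrow>
                 (Gt - J) *v u = 0 \<and> fst (snd (sr1_state g H M L x0 (Suc k))) = Gt)"
proof -
  interpret strongly_self_concordant_hessian H M
  proof unfold_locales
    show "transpose (H x) = H x" for x
      by (rule symmetric_matrixI) (rule derivative_of_gradient_symmetric[OF grad hess])
    show "0 \<le> v \<bullet> (H x *v v)" for x v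
      using mu_pos lower by (intro psd_if_mat_loewner_le[of \<mu>]) auto
  qed (rule ssc)
  have inv: "sr1_invariant H M (sr1_state g H M L x0 k)" for k
    unfolding sr1_state_def using upper by (intro sr1_invariant_funpow) (simp add: sr1_invariant_def)
  show ?thesis
    unfolding sr1_state_Suc by (intro allI sr1_step_skips_degenerate_update inv)
qed

end
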